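(* Let $(\mathsf K,\mathsf D)$ be a differential ring and $u\in\mathsf K$. For every integer $m\ge0$, in the Ore algebra $\mathsf K\langle\mathsf D\rangle$, $$(\mathsf D+u)^m=\sum_{j=0}^m\binom mj P_{m-j}(u)\,\mathsf D^j.$$
   Context: $(\mathsf K,\mathsf D)$: unital associative (possibly noncommutative) ring with derivation $\mathsf D$. $\mathsf K\langle\mathsf D\rangle$: Ore algebra with coefficients on the left and $\mathsf D a=a\mathsf D+\mathsf D(a)$. The noncommutative Bell polynomials are $P_0(u)=1$, $P_{m+1}(u)=\mathsf D(P_m(u))+u\,P_m(u)$. *)

theory Defs
  imports Main "HOL-Library.Function_Algebras"
begin

definition is_derivation :: "('a::ring_1 \<Rightarrow> 'a) \<Rightarrow> bool" where
  "is_derivation Dr \<longleftrightarrow> (\<forall>a b. Dr (a + b) = Dr a + Dr b) \<and> (\<forall>a b. Dr (a * b) = Dr a * b + a * Dr b)"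

text \<open>Elements of the Ore algebra K<D> are finitely supported coefficient functions
  p :: nat => 'a, representing sum_j (p j) D^j (coefficients on the left).\<close>
definition ore_monom :: "'a::zero \<Rightarrow> nat \<Rightarrow> (nat \<Rightarrow> 'a)" where
  "ore_monom c n = (\<lambda>k. if k = n then c else 0)"

definition ore_one :: "nat \<Rightarrow> 'a::ring_1" where
  "ore_one = ore_monom 1 0"

text \<open>Left multiplication by D, using the commutation rule D a = a D + D(a).\<close>
definition ore_Dmult :: "('a::ring_1 \<Rightarrow> 'a) \<Rightarrow> (nat \<Rightarrow> 'a) \<Rightarrow> (nat \<Rightarrow> 'a)" where
  "ore_Dmult Dr q = (\<lambda>j. (if j = 0 then 0 else q (j - 1)) + Dr (q j))"

definition ore_mult :: "('a::ring_1 \<Rightarrow> 'a) \<Rightarrow> (nat \<Rightarrow> 'a) \<Rightarrow> (nat \<Rightarrow> 'a) \<Rightarrow> (nat \<Rightarrow> 'a)" where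
  "ore_mult Dr p q = (\<Sum>i\<in>{i. p i \<noteq> 0}. (\<lambda>j. p i * ((ore_Dmult Dr ^^ i) q) j))"

primrec ore_pow :: "('a::ring_1 \<Rightarrow> 'a) \<Rightarrow> (nat \<Rightarrow> 'a) \<Rightarrow> nat \<Rightarrow> (nat \<Rightarrow> 'a)" where
  "ore_pow Dr p 0 = ore_one"
| "ore_pow Dr p (Suc n) = ore_mult Dr p (ore_pow Dr p n)"

primrec bellP :: "('a::ring_1 \<Rightarrow> 'a) \<Rightarrow> nat \<Rightarrow> 'a \<Rightarrow> 'a" where
  "bellP Dr 0 u = 1"
| "bellP Dr (Suc m) u = Dr (bellP Dr m u) + u * bellP Dr m u"

end

theory Submission
  imports Defs
begin

text \<open>
  Left multiplication by D + u sends a coefficient function q to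
  j \<mapsto> u q(j) + q(j - 1) + D(q(j)). If the coefficients of (D + u)^m are
  C(m,j) P(m-j)(u), this recurrence together with P(k+1) = D(P(k)) + u P(k) and
  Pascal's rule gives those of (D + u)^(m+1); D commutes with the integer factors
  C(m,j) because it is additive.
\<close>

lemma sum_fun_apply: "sum f S x = (\<Sum>i\<in>S. f i x)"
  by (induction S rule: infinite_finite_induct) auto

lemma derivation_add:
  assumes "is_derivation Dr"
  shows "Dr (a + b) = Dr a + Dr b"
  using assms unfolding is_derivation_def by blast

lemma derivation_zero:
  assumes "is_derivation Dr"
  shows "Dr 0 = 0"
  using derivation_add [OF assms, of 0 0] by simp

lemma derivation_of_nat_mult:
  assumes "is_derivation Dr"
  shows "Dr (of_nat n * x) = of_nat n * Dr x"
proof (induction n)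
  case 0
  then show ?case using derivation_zero [OF assms] by simp
next
  case (Suc n)
  have "Dr (of_nat (Suc n) * x) = Dr (x + of_nat n * x)"
    by (simp add: algebra_simps)
  also have "\<dots> = Dr x + of_nat n * Dr x"
    using Suc derivation_add [OF assms] by simp
  finally show ?case by (simp add: algebra_simps)
qed

lemma ore_mult_apply_superset:
  assumes "finite S" and "{i. p i \<noteq> 0} \<subseteq> S"
  shows "ore_mult Dr p q j = (\<Sum>i\<in>S. p i * (ore_Dmult Dr ^^ i) q j)"
  unfolding ore_mult_def sum_fun_apply
  using assms by (intro sum.mono_neutral_left) auto

lemma ore_mult_D_plus_const:
  fixes u :: "'a::ring_1"
  shows "ore_mult Dr (ore_monom 1 1 + ore_monom u 0) q j = u * q j + ore_Dmult Dr q j"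
proof -
  have "ore_mult Dr (ore_monom 1 1 + ore_monom u 0) q j
      = (\<Sum>i\<in>{0, 1}. (ore_monom 1 1 + ore_monom u 0) i * (ore_Dmult Dr ^^ i) q j)"
    by (rule ore_mult_apply_superset) (auto simp: ore_monom_def)
  then show ?thesis by (simp add: ore_monom_def)
qed

lemma ore_pow_D_plus_const_Suc:
  fixes u :: "'a::ring_1"
  defines "p \<equiv> ore_monom 1 1 + ore_monom u 0"
  shows "ore_pow Dr p (Suc m) j
      = u * ore_pow Dr p m j + (if j = 0 then 0 else ore_pow Dr p m (j - 1)) + Dr (ore_pow Dr p m j)"
  unfolding p_def ore_pow.simps ore_mult_D_plus_const ore_Dmult_def by (simp add: add.assoc)

text \<open>The Bell recurrence holds for all i once multiplied by C(m, i+1): for i \<ge> m the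
  truncated subtraction breaks it, but then the binomial factor vanishes.\<close>

lemma binomial_mult_bellP_Suc:
  "of_nat (m choose Suc i) * bellP Dr (m - i) u
     = of_nat (m choose Suc i) * (Dr (bellP Dr (m - Suc i) u) + u * bellP Dr (m - Suc i) u)"
proof (cases "i < m")
  case True
  then have "m - i = Suc (m - Suc i)" by simp
  then show ?thesis by simp
qed (simp add: binomial_eq_0)

lemma ore_pow_D_plus_const_coeff:
  fixes u :: "'a::ring_1"
  assumes D: "is_derivation Dr"
  shows "ore_pow Dr (ore_monom 1 1 + ore_monom u 0) m j = of_nat (m choose j) * bellP Dr (m - j) u"
proof (induction m arbitrary: j)
  case 0
  then show ?case by (simp add: ore_one_def ore_monom_def binomial_eq_0)
next
  case (Suc m)
  have u_of_nat: "u * (of_nat c * x) = of_nat c * (u * x)" for c x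
    by (metis mult.assoc mult_of_nat_commute)
  show ?case
  proof (cases j)
    case 0
    then show ?thesis
      unfolding ore_pow_D_plus_const_Suc Suc.IH
      by (simp add: derivation_of_nat_mult [OF D] u_of_nat)
  next
    case (Suc i)
    have "of_nat (Suc m choose Suc i) * bellP Dr (Suc m - Suc i) u
        = of_nat (m choose Suc i) * bellP Dr (m - i) u + of_nat (m choose i) * bellP Dr (m - i) u"
      by (simp add: algebra_simps)
    then show ?thesis
      unfolding ore_pow_D_plus_const_Suc Suc.IH
      using \<open>j = Suc i\<close> binomial_mult_bellP_Suc [of m i Dr u]
      by (simp add: derivation_of_nat_mult [OF D] u_of_nat algebra_simps)
  qed
qed

theorem mainTheorem4:
  fixes Dr :: "'a::ring_1 \<Rightarrow> 'a" and u :: 'a and m :: nat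
  assumes "is_derivation Dr"
  shows "ore_pow Dr (ore_monom 1 1 + ore_monom u 0) m =
         (\<Sum>j\<le>m. ore_monom (of_nat (m choose j) * bellP Dr (m - j) u) j)"
proof
  fix k
  have "(\<Sum>j\<le>m. ore_monom (of_nat (m choose j) * bellP Dr (m - j) u) j) k
      = (\<Sum>j\<le>m. if k = j then of_nat (m choose j) * bellP Dr (m - j) u else 0)"
    by (simp add: sum_fun_apply ore_monom_def eq_commute)
  also have "\<dots> = of_nat (m choose k) * bellP Dr (m - k) u"
    by (simp add: sum.delta binomial_eq_0)
  also have "\<dots> = ore_pow Dr (ore_monom 1 1 + ore_monom u 0) m k"
    using ore_pow_D_plus_const_coeff [OF assms] by simp
  finally show "ore_pow Dr (ore_monom 1 1 + ore_monom u 0) m k =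
      (\<Sum>j\<le>m. ore_monom (of_nat (m choose j) * bellP Dr (m - j) u) j) k"
    by simp
qed

end
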